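(* Let $A\in\mathbb{R}^{n\times n}$ be symmetric, $Z\in\mathbb{R}^{n\times k}$, $\alpha\in\{+1,-1\}$, $\beta\in\{+1,-1\}$, and suppose that both $A$ and $A+\alpha ZZ^{T}$ are positive definite. Let $V\in\mathbb{R}^{n\times k}$ be defined by $V=Z$ if $\beta=1$ and $V=A^{-1}Z(I_k+\alpha Z^{T}A^{-1}Z)^{-1/2}$ if $\beta=-1$. Consider the matrix equation in $C\in\mathbb{R}^{n\times n}$ \[ A^{\beta/2}C+CA^{\beta/2}+\alpha\beta C^{2}=VV^{T}. \quad (\ast) \] Then $C=\alpha\beta\left((A+\alpha ZZ^{T})^{\beta/2}-A^{\beta/2}\right)$ is a solution of $(\ast)$. Conversely, if $C$ is a positive definite solution of $(\ast)$ for which $A^{\beta/2}+\alpha\beta C$ is positive definite as well, then $A^{\beta/2}+\alpha\beta C=(A+\alpha ZZ^{T})^{\beta/2}$.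
   Context: For a symmetric positive definite matrix $M$, $M^{1/2}$ is its principal square root and $M^{-1/2}=(M^{1/2})^{-1}$; $M^{\beta/2}$ is interpreted accordingly for $\beta=\pm1$. With this choice of $V$ one has $(A+\alpha ZZ^{T})^{\beta}=A^{\beta}+\alpha\beta VV^{T}$. *)

theory Defs
  imports "HOL-Analysis.Analysis"
begin

definition pos_def :: "real^'n^'n \<Rightarrow> bool" where
  "pos_def M \<longleftrightarrow> transpose M = M \<and> (\<forall>x. x \<noteq> 0 \<longrightarrow> x \<bullet> (M *v x) > 0)"

definition msqrt :: "real^'n^'n \<Rightarrow> real^'n^'n" where
  "msqrt M = (THE S. pos_def S \<and> S ** S = M)"

text \<open>M^(beta/2) for beta = 1 or -1: M^(1/2), resp. (M^(1/2))^(-1).\<close>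
definition mpow_half :: "real \<Rightarrow> real^'n^'n \<Rightarrow> real^'n^'n" where
  "mpow_half \<beta> M = (if \<beta> = 1 then msqrt M else matrix_inv (msqrt M))"

end

theory Submission
  imports Defs
begin

text \<open>
  Write S = A^(beta/2), T = (A + alpha Z Z^T)^(beta/2) and gamma = alpha beta. The low-rank
  update gives T^2 = S^2 + gamma V V^T: trivially for beta = 1, and by the Sherman-Morrison-Woodbury
  formula for beta = -1, which is where the factor (I + alpha Z^T A^-1 Z)^(-1/2) in V comes from.
  Since gamma^2 = 1, the equation for C is equivalent to (S + gamma C)^2 = S^2 + gamma V V^T = T^2.
  Hence C = gamma (T - S) solves it, and for any solution with S + gamma C positive definite,
  S + gamma C = T by uniqueness of positive definite square roots. Existence of these square
  roots, on which the definition of msqrt relies, comes from the spectral theorem, obtained by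
  maximising the Rayleigh quotient.
\<close>

lemma matrix_add_rdistrib:
  fixes A B :: "'a::semiring_1^'n^'m"
  shows "(A + B) ** C = A ** C + B ** C"
  by (simp add: matrix_matrix_mult_def vec_eq_iff sum.distrib distrib_right)

lemma matrix_diff_ldistrib:
  fixes A :: "'a::ring_1^'n^'m"
  shows "A ** (B - C) = A ** B - A ** C"
  by (simp add: matrix_matrix_mult_def vec_eq_iff sum_subtractf right_diff_distrib)

lemma matrix_diff_rdistrib:
  fixes A B :: "'a::ring_1^'n^'m"
  shows "(A - B) ** C = A ** C - B ** C"
  by (simp add: matrix_matrix_mult_def vec_eq_iff sum_subtractf left_diff_distrib)

lemma transpose_add: "transpose (A + B) = transpose A + transpose B"
  by (simp add: transpose_def vec_eq_iff)

lemma transpose_diff: "transpose (A - B) = transpose A - transpose B"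
  by (simp add: transpose_def vec_eq_iff)

lemma matrix_inv_inverse:
  fixes A :: "'a::field^'n^'n"
  assumes "invertible A"
  shows "A ** matrix_inv A = mat 1" and "matrix_inv A ** A = mat 1"
proof -
  have "A ** matrix_inv A = mat 1 \<and> matrix_inv A ** A = mat 1"
    unfolding matrix_inv_def by (rule someI_ex) (use assms invertible_def in blast)
  then show "A ** matrix_inv A = mat 1" and "matrix_inv A ** A = mat 1" by auto
qed

lemma matrix_inv_unique:
  fixes A B :: "'a::field^'n^'n"
  assumes "A ** B = mat 1"
  shows "matrix_inv A = B"
proof -
  have "invertible A"
    using assms invertible_right_inverse by blast
  have "matrix_inv A = matrix_inv A ** (A ** B)"
    by (simp add: assms)
  also have "\<dots> = B"
    by (simp add: matrix_mul_assoc matrix_inv_inverse \<open>invertible A\<close>)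
  finally show ?thesis .
qed

lemma inner_transpose_matrix_vector:
  fixes M :: "real^'n^'m"
  shows "x \<bullet> (transpose M *v y) = (M *v x) \<bullet> y"
  by (metis dot_lmul_matrix inner_commute transpose_matrix_vector)

lemma symmetric_inner_matrix_vector:
  fixes M :: "real^'n^'n"
  assumes "transpose M = M"
  shows "x \<bullet> (M *v y) = (M *v x) \<bullet> y"
  by (metis assms inner_transpose_matrix_vector)

lemma pos_def_symmetric: "pos_def M \<Longrightarrow> transpose M = M"
  by (simp add: pos_def_def)

lemma pos_def_invertible:
  assumes "pos_def M"
  shows "invertible M"
proof -
  have "M *v x = 0 \<Longrightarrow> x = 0" for x
    using assms unfolding pos_def_def by (metis inner_zero_right less_irrefl)
  then show ?thesis
    using matrix_left_invertible_ker invertible_left_inverse by blast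
qed

lemma pos_def_matrix_inv:
  assumes "pos_def M"
  shows "pos_def (matrix_inv M)"
proof -
  note inv = matrix_inv_inverse[OF pos_def_invertible[OF assms]]
  have "M ** transpose (matrix_inv M) = mat 1"
    by (metis inv(2) matrix_transpose_mul pos_def_symmetric[OF assms] transpose_mat)
  then have sym: "transpose (matrix_inv M) = matrix_inv M"
    using matrix_inv_unique by metis
  have "x \<bullet> (matrix_inv M *v x) > 0" if "x \<noteq> 0" for x
  proof -
    define y where "y = matrix_inv M *v x"
    have x: "x = M *v y"
      by (simp add: y_def matrix_vector_mul_assoc inv)
    with that have "y \<noteq> 0" by auto
    then have "y \<bullet> (M *v y) > 0"
      using assms pos_def_def by blast
    then show ?thesis
      using x y_def by (metis inner_commute)
  qed
  with sym show ?thesis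
    by (simp add: pos_def_def)
qed

section \<open>Spectral theorem for symmetric matrices\<close>

lemma quadratic_nonneg_imp_linear_coeff_zero:
  fixes a c :: real
  assumes "\<And>t. 0 \<le> a * t + c * t\<^sup>2"
  shows "a = 0"
proof (rule ccontr)
  assume "a \<noteq> 0"
  define d where "d = \<bar>c\<bar> + 1"
  have d: "d > 0" "c / d < 1"
    by (auto simp: d_def)
  have "a * (- a / d) + c * (- a / d)\<^sup>2 = a\<^sup>2 / d * (c / d - 1)"
    using d(1) by (simp add: power2_eq_square field_simps)
  also have "\<dots> < 0"
    using \<open>a \<noteq> 0\<close> d by (intro mult_pos_neg) auto
  finally show False
    using assms[of "- a / d"] by linarith
qed

lemma rayleigh_quotient_attains_max:
  fixes M :: "real^'n^'n"
  assumes S: "subspace S" and "x0 \<in> S" "x0 \<noteq> 0"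
  obtains v where "v \<in> S" "norm v = 1"
    "\<And>x. x \<in> S \<Longrightarrow> x \<bullet> (M *v x) \<le> (v \<bullet> (M *v v)) * (x \<bullet> x)"
proof -
  define K where "K = S \<inter> sphere 0 1"
  have "compact K"
    unfolding K_def using closed_subspace[OF S] by (simp add: closed_Int_compact)
  moreover have "x0 /\<^sub>R norm x0 \<in> K"
    unfolding K_def using assms by (simp add: subspace_scale)
  moreover have "continuous_on K (\<lambda>x. x \<bullet> (M *v x))"
    by (intro continuous_intros)
  ultimately obtain v where "v \<in> K" and vmax: "\<And>y. y \<in> K \<Longrightarrow> y \<bullet> (M *v y) \<le> v \<bullet> (M *v v)"
    using continuous_attains_sup[of K] by blast
  have "x \<bullet> (M *v x) \<le> (v \<bullet> (M *v v)) * (x \<bullet> x)" if "x \<in> S" for x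
  proof (cases "x = 0")
    case False
    then have "x /\<^sub>R norm x \<in> K"
      unfolding K_def using that S by (simp add: subspace_scale)
    moreover have "(x /\<^sub>R norm x) \<bullet> (M *v (x /\<^sub>R norm x)) = (x \<bullet> (M *v x)) / (norm x)\<^sup>2"
      by (simp add: matrix_vector_mult_scaleR power2_eq_square field_simps)
    ultimately have "(x \<bullet> (M *v x)) / (norm x)\<^sup>2 \<le> v \<bullet> (M *v v)"
      using vmax by metis
    then show ?thesis
      using False by (simp add: dot_square_norm field_simps)
  qed simp
  moreover have "v \<in> S" "norm v = 1"
    using \<open>v \<in> K\<close> by (auto simp: K_def)
  ultimately show thesis
    using that by blast
qed

lemma rayleigh_maximizer_eigenvector:
  fixes M :: "real^'n^'n"
  assumes sym: "transpose M = M" and S: "subspace S" and invariant: "\<And>x. x \<in> S \<Longrightarrow> M *v x \<in> S"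
    and vS: "v \<in> S" and vv: "v \<bullet> v = 1"
    and max: "\<And>x. x \<in> S \<Longrightarrow> x \<bullet> (M *v x) \<le> (v \<bullet> (M *v v)) * (x \<bullet> x)"
  shows "M *v v = (v \<bullet> (M *v v)) *\<^sub>R v"
proof -
  define l where "l = v \<bullet> (M *v v)"
  have stationary: "w \<bullet> (M *v v) = l * (w \<bullet> v)" if "w \<in> S" for w
  proof -
    have "0 \<le> 2 * (l * (w \<bullet> v) - w \<bullet> (M *v v)) * t + (l * (w \<bullet> w) - w \<bullet> (M *v w)) * t\<^sup>2" for t
    proof -
      have "v + t *\<^sub>R w \<in> S"
        using S vS that by (simp add: subspace_add subspace_scale)
      from max[OF this] show ?thesis
        using vv symmetric_inner_matrix_vector[OF sym, of v w]
        by (simp add: l_def algebra_simps inner_commute power2_eq_square)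
    qed
    then show ?thesis
      using quadratic_nonneg_imp_linear_coeff_zero by fastforce
  qed
  define w where "w = M *v v - l *\<^sub>R v"
  have "w \<in> S"
    unfolding w_def using S vS invariant by (simp add: subspace_diff subspace_scale)
  then have "w \<bullet> w = 0"
    using stationary[of w] by (simp add: w_def l_def inner_diff_left inner_commute algebra_simps)
  then show ?thesis
    by (simp add: w_def l_def)
qed

definition orthonormal_eigensystem :: "real^'n^'n \<Rightarrow> (real^'n) set \<Rightarrow> bool" where
  "orthonormal_eigensystem M B \<longleftrightarrow> finite B \<and> pairwise orthogonal B \<and>
     (\<forall>b\<in>B. norm b = 1 \<and> M *v b = (b \<bullet> (M *v b)) *\<^sub>R b)"

lemma orthonormal_eigensystem_inner:
  assumes "orthonormal_eigensystem M B" "b \<in> B" "b' \<in> B"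
  shows "b' \<bullet> b = (if b' = b then 1 else 0)"
  using assms unfolding orthonormal_eigensystem_def pairwise_def orthogonal_def
  by (auto simp: dot_square_norm)

lemma orthonormal_eigensystem_card_le:
  fixes M :: "real^'n^'n"
  assumes "orthonormal_eigensystem M B"
  shows "card B \<le> CARD('n)"
proof -
  have "independent B"
    using assms unfolding orthonormal_eigensystem_def
    by (intro pairwise_orthogonal_independent) auto
  then show ?thesis
    using independent_card_le by fastforce
qed

lemma orthonormal_eigensystem_complement_invariant:
  fixes M :: "real^'n^'n"
  assumes sym: "transpose M = M" and B: "orthonormal_eigensystem M B"
    and x: "\<forall>b\<in>B. orthogonal b x"
  shows "\<forall>b\<in>B. orthogonal b (M *v x)"
proof
  fix b assume "b \<in> B"
  have "b \<bullet> (M *v x) = (M *v b) \<bullet> x"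
    by (rule symmetric_inner_matrix_vector[OF sym])
  also have "\<dots> = (b \<bullet> (M *v b)) * (b \<bullet> x)"
    using B \<open>b \<in> B\<close> unfolding orthonormal_eigensystem_def by (metis inner_scaleR_left)
  finally show "orthogonal b (M *v x)"
    using x \<open>b \<in> B\<close> by (simp add: orthogonal_def)
qed

theorem symmetric_matrix_orthonormal_eigenbasis:
  fixes M :: "real^'n^'n"
  assumes sym: "transpose M = M"
  obtains B where "orthonormal_eigensystem M B" "span B = UNIV"
proof -
  have "orthonormal_eigensystem M {}"
    by (simp add: orthonormal_eigensystem_def)
  then obtain B where B: "orthonormal_eigensystem M B"
    and maximal: "\<And>B'. orthonormal_eigensystem M B' \<Longrightarrow> card B' \<le> card B"
    using ex_has_greatest_nat[of "orthonormal_eigensystem M" "{}" card "CARD('n) + 1"]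
      orthonormal_eigensystem_card_le by (metis less_Suc_eq_le Suc_eq_plus1)
  \<comment> \<open>Otherwise the orthogonal complement of \<open>B\<close> is a nonzero \<open>M\<close>-invariant subspace,
    on which maximising the Rayleigh quotient yields a further unit eigenvector.\<close>
  have "span B = UNIV"
  proof (rule ccontr)
    assume "span B \<noteq> UNIV"
    then have "dim B < DIM(real^'n)"
      by (metis dim_eq_full dim_subset_UNIV le_neq_implies_less)
    then obtain x0 where "x0 \<noteq> 0" and x0: "\<And>y. y \<in> span B \<Longrightarrow> orthogonal x0 y"
      using orthogonal_to_subspace_exists by blast
    define S where "S = {y. \<forall>b\<in>B. orthogonal b y}"
    have S: "subspace S"
      unfolding S_def by (rule subspace_orthogonal_to_vectors)
    have "x0 \<in> S"
      using x0 span_base orthogonal_commute unfolding S_def by blast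
    then obtain v where "v \<in> S" "norm v = 1"
      "\<And>x. x \<in> S \<Longrightarrow> x \<bullet> (M *v x) \<le> (v \<bullet> (M *v v)) * (x \<bullet> x)"
      using rayleigh_quotient_attains_max[OF S _ \<open>x0 \<noteq> 0\<close>] by blast
    moreover have "M *v x \<in> S" if "x \<in> S" for x
      using orthonormal_eigensystem_complement_invariant[OF sym B] that by (simp add: S_def)
    ultimately have "M *v v = (v \<bullet> (M *v v)) *\<^sub>R v"
      using rayleigh_maximizer_eigenvector[OF sym S] by (simp add: dot_square_norm)
    moreover have "v \<notin> B"
      using \<open>v \<in> S\<close> \<open>norm v = 1\<close> by (auto simp: S_def orthogonal_def)
    ultimately have "orthonormal_eigensystem M (insert v B)"
      using B \<open>v \<in> S\<close> \<open>norm v = 1\<close> unfolding orthonormal_eigensystem_def pairwise_insert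
      by (auto simp: S_def orthogonal_commute)
    then have "card (insert v B) \<le> card B"
      by (rule maximal)
    with \<open>v \<notin> B\<close> B show False
      by (simp add: orthonormal_eigensystem_def)
  qed
  with B that show thesis
    by blast
qed

section \<open>Positive definite square roots\<close>

lemma matrix_eq_on_spanning_set:
  fixes A C :: "real^'n^'m"
  assumes "span B = UNIV" "\<And>b. b \<in> B \<Longrightarrow> A *v b = C *v b"
  shows "A = C"
proof -
  have "A *v x = C *v x" for x
    using real_vector.linear_eq_on_span[of "(*v) A" "(*v) C" B x] assms by auto
  then show ?thesis
    by (simp add: matrix_eq)
qed

definition outer_product :: "real^'n \<Rightarrow> real^'n^'n" where
  "outer_product b = (\<chi> i j. b$i * b$j)"

lemma outer_product_sum_apply:
  "(\<Sum>b\<in>B. c b *\<^sub>R outer_product b) *v x = (\<Sum>b\<in>B. (c b * (b \<bullet> x)) *\<^sub>R b)"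
  by (simp add: outer_product_def vec_eq_iff matrix_vector_mult_def sum_component inner_vec_def
      sum_distrib_left sum_distrib_right mult_ac sum.swap[of _ B])

lemma pos_def_outer_product_sum:
  fixes B :: "(real^'n) set"
  assumes "finite B" "span B = UNIV" "\<And>b. b \<in> B \<Longrightarrow> c b > 0"
  shows "pos_def (\<Sum>b\<in>B. c b *\<^sub>R outer_product b)"
  unfolding pos_def_def
proof (intro conjI allI impI)
  show "transpose (\<Sum>b\<in>B. c b *\<^sub>R outer_product b) = (\<Sum>b\<in>B. c b *\<^sub>R outer_product b)"
    by (simp add: outer_product_def vec_eq_iff transpose_def sum_component mult_ac)
  fix x :: "real^'n"
  assume "x \<noteq> 0"
  then obtain b where "b \<in> B" "b \<bullet> x \<noteq> 0"
    using orthogonal_to_span[of x B x] assms(2) orthogonal_self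
    by (metis UNIV_I orthogonal_commute orthogonal_def)
  have "0 < c b * (b \<bullet> x)\<^sup>2"
    using assms(3)[OF \<open>b \<in> B\<close>] \<open>b \<bullet> x \<noteq> 0\<close> by simp
  also have "\<dots> \<le> (\<Sum>b\<in>B. c b * (b \<bullet> x)\<^sup>2)"
    using assms \<open>b \<in> B\<close> by (intro member_le_sum) (auto simp: less_imp_le)
  also have "\<dots> = x \<bullet> ((\<Sum>b\<in>B. c b *\<^sub>R outer_product b) *v x)"
    by (simp add: outer_product_sum_apply inner_sum_right power2_eq_square inner_commute mult_ac)
  finally show "0 < x \<bullet> ((\<Sum>b\<in>B. c b *\<^sub>R outer_product b) *v x)" .
qed

lemma pos_def_square_root_exists:
  fixes M :: "real^'n^'n"
  assumes pd: "pos_def M"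
  obtains S where "pos_def S" "S ** S = M"
proof -
  obtain B where B: "orthonormal_eigensystem M B" and span: "span B = UNIV"
    using symmetric_matrix_orthonormal_eigenbasis pos_def_symmetric[OF pd] by blast
  have "finite B"
    using B by (simp add: orthonormal_eigensystem_def)
  define l where "l b = b \<bullet> (M *v b)" for b
  have eigen: "M *v b = l b *\<^sub>R b" if "b \<in> B" for b
    using B that unfolding orthonormal_eigensystem_def l_def by blast
  have l_pos: "l b > 0" if "b \<in> B" for b
  proof -
    have "b \<noteq> 0"
      using B that unfolding orthonormal_eigensystem_def by force
    with pd show ?thesis
      by (simp add: pos_def_def l_def)
  qed
  define S where "S = (\<Sum>b\<in>B. sqrt (l b) *\<^sub>R outer_product b)"
  have S_eigen: "S *v b = sqrt (l b) *\<^sub>R b" if "b \<in> B" for b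
  proof -
    have "S *v b = (\<Sum>b'\<in>B. if b' = b then sqrt (l b) *\<^sub>R b else 0)"
      unfolding S_def outer_product_sum_apply
      using orthonormal_eigensystem_inner[OF B that] by (intro sum.cong) auto
    then show ?thesis
      using \<open>finite B\<close> that by simp
  qed
  have "S ** S = M"
  proof (rule matrix_eq_on_spanning_set[OF span])
    fix b assume "b \<in> B"
    then show "(S ** S) *v b = M *v b"
      using S_eigen eigen l_pos
      by (simp add: matrix_vector_mul_assoc[symmetric] matrix_vector_mult_scaleR less_imp_le)
  qed
  moreover have "pos_def S"
    unfolding S_def using \<open>finite B\<close> span l_pos by (intro pos_def_outer_product_sum) auto
  ultimately show thesis
    using that by blast
qed

lemma pos_def_square_root_unique:
  fixes P Q :: "real^'n^'n"
  assumes P: "pos_def P" and Q: "pos_def Q" and PQ: "P ** P = Q ** Q"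
  shows "P = Q"
proof -
  define X where "X = P - Q"
  have sym: "transpose X = X"
    using P Q by (simp add: X_def transpose_diff pos_def_symmetric)
  then obtain B where B: "orthonormal_eigensystem X B" and span: "span B = UNIV"
    by (rule symmetric_matrix_orthonormal_eigenbasis)
  have sylvester: "P ** X + X ** Q = 0"
    using PQ by (simp add: X_def matrix_diff_ldistrib matrix_diff_rdistrib)
  have "X *v b = 0 *v b" if "b \<in> B" for b
  proof -
    define l where "l = b \<bullet> (X *v b)"
    have eigen: "X *v b = l *\<^sub>R b"
      using B that unfolding orthonormal_eigensystem_def l_def by blast
    have "b \<noteq> 0"
      using B that unfolding orthonormal_eigensystem_def by force
    then have pos: "b \<bullet> (P *v b) + b \<bullet> (Q *v b) > 0"
      using P Q unfolding pos_def_def by (simp add: add_pos_pos)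
    have "0 = b \<bullet> ((P ** X + X ** Q) *v b)"
      using sylvester by simp
    also have "\<dots> = b \<bullet> (P *v (X *v b)) + (X *v b) \<bullet> (Q *v b)"
      by (simp add: matrix_vector_mult_add_rdistrib matrix_vector_mul_assoc[symmetric]
          inner_add_right symmetric_inner_matrix_vector[OF sym])
    also have "\<dots> = l * (b \<bullet> (P *v b) + b \<bullet> (Q *v b))"
      by (simp add: eigen matrix_vector_mult_scaleR algebra_simps)
    finally have "l = 0"
      using pos by simp
    then show ?thesis
      by (simp add: eigen)
  qed
  then have "X = 0"
    by (rule matrix_eq_on_spanning_set[OF span])
  then show ?thesis
    by (simp add: X_def)
qed

lemma msqrt_unique:
  assumes "pos_def S" "S ** S = M"
  shows "msqrt M = S"
  unfolding msqrt_def
  using assms pos_def_square_root_unique by (intro the_equality) auto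

lemma msqrt:
  assumes "pos_def M"
  shows pos_def_msqrt: "pos_def (msqrt M)" and msqrt_square: "msqrt M ** msqrt M = M"
  using pos_def_square_root_exists[OF assms] msqrt_unique by metis+

lemma mpow_half:
  fixes M :: "real^'n^'n"
  assumes "pos_def M" "\<beta> \<in> {1, -1}"
  shows pos_def_mpow_half: "pos_def (mpow_half \<beta> M)"
    and mpow_half_square:
      "mpow_half \<beta> M ** mpow_half \<beta> M = (if \<beta> = 1 then M else matrix_inv M)"
proof -
  define R where "R = msqrt M"
  have R: "pos_def R" "R ** R = M"
    using pos_def_msqrt[OF assms(1)] msqrt_square[OF assms(1)] by (simp_all add: R_def)
  note R_inv = matrix_inv_inverse[OF pos_def_invertible[OF R(1)]]
  have "M ** (matrix_inv R ** matrix_inv R) = R ** (R ** matrix_inv R) ** matrix_inv R"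
    by (simp add: R(2)[symmetric] matrix_mul_assoc)
  then have "matrix_inv M = matrix_inv R ** matrix_inv R"
    by (intro matrix_inv_unique) (simp add: R_inv)
  then show "pos_def (mpow_half \<beta> M)"
    and "mpow_half \<beta> M ** mpow_half \<beta> M = (if \<beta> = 1 then M else matrix_inv M)"
    using R pos_def_matrix_inv[OF R(1)] by (simp_all add: mpow_half_def R_def)
qed

section \<open>Low-rank updates\<close>

lemma capacitance_quadratic_form:
  fixes A :: "real^'n^'n" and Z :: "real^'k^'n"
  shows "y \<bullet> ((mat 1 + \<alpha> *\<^sub>R (transpose Z ** matrix_inv A ** Z)) *v y)
    = y \<bullet> y + \<alpha> * ((Z *v y) \<bullet> (matrix_inv A *v (Z *v y)))"
proof -
  have "(mat 1 + \<alpha> *\<^sub>R (transpose Z ** matrix_inv A ** Z)) *v y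
      = y + \<alpha> *\<^sub>R (transpose Z *v (matrix_inv A *v (Z *v y)))"
    by (simp add: matrix_vector_mult_add_rdistrib scaleR_matrix_vector_assoc[symmetric]
        matrix_vector_mul_assoc matrix_mul_assoc del: transpose_matrix_vector)
  then show ?thesis
    by (simp add: inner_add_right inner_transpose_matrix_vector del: transpose_matrix_vector)
qed

lemma downdate_quadratic_form_less:
  fixes A :: "real^'n^'n" and Z :: "real^'k^'n"
  assumes A: "pos_def A" and B: "pos_def (A - Z ** transpose Z)" and "y \<noteq> 0"
  shows "(Z *v y) \<bullet> (matrix_inv A *v (Z *v y)) < y \<bullet> y"
proof -
  define u where "u = matrix_inv A *v (Z *v y)"
  define q where "q = transpose Z *v u"
  have "A *v u = Z *v y"
    by (simp add: u_def matrix_vector_mul_assoc matrix_mul_assoc matrix_inv_inverse pos_def_invertible[OF A])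
  then have B_u: "(A - Z ** transpose Z) *v u = Z *v y - Z *v q"
    by (simp add: q_def matrix_vector_mult_diff_rdistrib matrix_vector_mul_assoc[symmetric]
        del: transpose_matrix_vector)
  have "u \<bullet> (Z *v q) = q \<bullet> q"
    using inner_transpose_matrix_vector[of u "transpose Z" q] by (simp add: q_def del: transpose_matrix_vector)
  moreover have "y \<bullet> q = (Z *v y) \<bullet> u"
    by (simp add: q_def inner_transpose_matrix_vector del: transpose_matrix_vector)
  ultimately have "y \<bullet> y - (Z *v y) \<bullet> u = (y - q) \<bullet> (y - q) + u \<bullet> (Z *v y - Z *v q)"
    by (simp add: inner_diff_left inner_diff_right inner_commute algebra_simps)
  also have "\<dots> = (y - q) \<bullet> (y - q) + u \<bullet> ((A - Z ** transpose Z) *v u)"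
    by (simp only: B_u)
  also have "\<dots> > 0"
  proof (cases "u = 0")
    case True
    with \<open>y \<noteq> 0\<close> show ?thesis
      by (simp add: q_def)
  next
    case False
    with B have "u \<bullet> ((A - Z ** transpose Z) *v u) > 0"
      by (simp add: pos_def_def)
    then show ?thesis
      by (simp add: add_nonneg_pos)
  qed
  finally show ?thesis
    by (simp add: u_def)
qed

lemma pos_def_capacitance_matrix:
  fixes A :: "real^'n^'n" and Z :: "real^'k^'n"
  assumes A: "pos_def A" and B: "pos_def (A + \<alpha> *\<^sub>R (Z ** transpose Z))" and \<alpha>: "\<alpha> \<in> {1, -1}"
  shows "pos_def (mat 1 + \<alpha> *\<^sub>R (transpose Z ** matrix_inv A ** Z))"
  unfolding pos_def_def
proof (intro conjI allI impI)
  have "transpose (matrix_inv A) = matrix_inv A"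
    using pos_def_symmetric[OF pos_def_matrix_inv[OF A]] .
  then show "transpose (mat 1 + \<alpha> *\<^sub>R (transpose Z ** matrix_inv A ** Z)) =
      mat 1 + \<alpha> *\<^sub>R (transpose Z ** matrix_inv A ** Z)"
    by (simp add: transpose_add transpose_scalar matrix_transpose_mul matrix_mul_assoc)
  fix y :: "real^'k"
  assume "y \<noteq> 0"
  have "0 < y \<bullet> y + \<alpha> * ((Z *v y) \<bullet> (matrix_inv A *v (Z *v y)))"
  proof (cases "\<alpha> = 1")
    case True
    have "0 \<le> (Z *v y) \<bullet> (matrix_inv A *v (Z *v y))"
      using pos_def_matrix_inv[OF A] unfolding pos_def_def
      by (cases "Z *v y = 0") (auto intro: less_imp_le)
    with \<open>y \<noteq> 0\<close> True show ?thesis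
      by (simp add: add_pos_nonneg)
  next
    case False
    with \<alpha> B have "\<alpha> = -1" "pos_def (A - Z ** transpose Z)"
      by auto
    with downdate_quadratic_form_less[OF A _ \<open>y \<noteq> 0\<close>] show ?thesis
      by simp
  qed
  then show "0 < y \<bullet> ((mat 1 + \<alpha> *\<^sub>R (transpose Z ** matrix_inv A ** Z)) *v y)"
    by (simp only: capacitance_quadratic_form)
qed

theorem matrix_inv_low_rank_update:
  fixes A :: "real^'n^'n" and U :: "real^'k^'n" and Y :: "real^'n^'k"
  assumes "invertible A" and "invertible (mat 1 + Y ** matrix_inv A ** U)"
  shows "matrix_inv (A + U ** Y) =
    matrix_inv A - matrix_inv A ** U ** matrix_inv (mat 1 + Y ** matrix_inv A ** U) ** Y ** matrix_inv A"
proof (rule matrix_inv_unique)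
  define K where "K = mat 1 + Y ** matrix_inv A ** U"
  note A_inv = matrix_inv_inverse[OF assms(1)] and K_inv = matrix_inv_inverse[OF assms(2)[folded K_def]]
  have push_through: "(A + U ** Y) ** matrix_inv A ** U = U ** K"
    by (simp add: K_def matrix_add_rdistrib matrix_add_ldistrib A_inv matrix_mul_assoc)
  have "(A + U ** Y) ** (matrix_inv A ** U ** matrix_inv K ** Y ** matrix_inv A)
      = U ** (K ** matrix_inv K) ** Y ** matrix_inv A"
    by (simp add: push_through[symmetric] matrix_mul_assoc)
  then show "(A + U ** Y) ** (matrix_inv A - matrix_inv A ** U ** matrix_inv K ** Y ** matrix_inv A) = mat 1"
    by (simp add: matrix_diff_ldistrib matrix_add_rdistrib A_inv K_inv matrix_mul_assoc)
qed

lemma mpow_half_low_rank_update_square: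
  fixes A :: "real^'n^'n" and Z V :: "real^'k^'n"
  assumes A: "pos_def A" and B: "pos_def (A + \<alpha> *\<^sub>R (Z ** transpose Z))"
    and \<alpha>: "\<alpha> \<in> {1, -1}" and \<beta>: "\<beta> \<in> {1, -1}"
    and V: "V = (if \<beta> = 1 then Z
              else matrix_inv A ** Z **
                   matrix_inv (msqrt (mat 1 + \<alpha> *\<^sub>R (transpose Z ** matrix_inv A ** Z))))"
  shows "mpow_half \<beta> (A + \<alpha> *\<^sub>R (Z ** transpose Z)) ** mpow_half \<beta> (A + \<alpha> *\<^sub>R (Z ** transpose Z))
    = mpow_half \<beta> A ** mpow_half \<beta> A + (\<alpha> * \<beta>) *\<^sub>R (V ** transpose V)"
proof (cases "\<beta> = 1")
  case True
  then show ?thesis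
    using A B V by (simp add: mpow_half_square)
next
  case False
  with \<beta> have "\<beta> = -1" by simp
  define K where "K = mat 1 + \<alpha> *\<^sub>R (transpose Z ** matrix_inv A ** Z)"
  define R where "R = mpow_half (-1) K"
  have K: "pos_def K"
    unfolding K_def by (rule pos_def_capacitance_matrix[OF A B \<alpha>])
  have R: "transpose R = R" "R ** R = matrix_inv K"
    using pos_def_symmetric[OF pos_def_mpow_half[OF K]] mpow_half_square[OF K] by (simp_all add: R_def)
  have A_inv: "transpose (matrix_inv A) = matrix_inv A"
    by (rule pos_def_symmetric[OF pos_def_matrix_inv[OF A]])
  have "V = matrix_inv A ** Z ** R"
    using V False by (simp add: R_def K_def mpow_half_def)
  then have VV: "V ** transpose V = matrix_inv A ** Z ** matrix_inv K ** transpose Z ** matrix_inv A"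
    by (simp add: matrix_transpose_mul R A_inv matrix_mul_assoc flip: R(2))
  have "matrix_inv (A + Z ** (\<alpha> *\<^sub>R transpose Z)) = matrix_inv A
      - matrix_inv A ** Z ** matrix_inv (mat 1 + \<alpha> *\<^sub>R transpose Z ** matrix_inv A ** Z)
        ** (\<alpha> *\<^sub>R transpose Z) ** matrix_inv A"
    using K by (intro matrix_inv_low_rank_update pos_def_invertible A)
      (simp add: K_def scalar_matrix_assoc)
  then have "matrix_inv (A + \<alpha> *\<^sub>R (Z ** transpose Z))
      = matrix_inv A - \<alpha> *\<^sub>R (matrix_inv A ** Z ** matrix_inv K ** transpose Z ** matrix_inv A)"
    by (simp add: K_def matrix_scalar_ac scalar_matrix_assoc)
  with \<open>\<beta> = -1\<close> VV show ?thesis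
    using mpow_half_square[OF A \<beta>] mpow_half_square[OF B \<beta>] by simp
qed

lemma riccati_iff_completed_square:
  fixes S C W :: "real^'n^'n"
  assumes "\<gamma> * \<gamma> = 1"
  shows "S ** C + C ** S + \<gamma> *\<^sub>R (C ** C) = W \<longleftrightarrow>
    (S + \<gamma> *\<^sub>R C) ** (S + \<gamma> *\<^sub>R C) = S ** S + \<gamma> *\<^sub>R W"
proof -
  have "(S + \<gamma> *\<^sub>R C) ** (S + \<gamma> *\<^sub>R C) = S ** S + \<gamma> *\<^sub>R (S ** C + C ** S + \<gamma> *\<^sub>R (C ** C))"
    using assms by (simp add: matrix_add_ldistrib matrix_add_rdistrib matrix_scalar_ac
        flip: scalar_matrix_assoc) (simp add: algebra_simps)
  moreover have "\<gamma> \<noteq> 0"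
    using assms by auto
  ultimately show ?thesis
    by auto
qed

theorem proposition8:
  fixes A :: "real^'n^'n" and Z V :: "real^'k^'n" and \<alpha> \<beta> :: real
  assumes "transpose A = A"
    and "\<alpha> \<in> {1, -1}" and "\<beta> \<in> {1, -1}"
    and "pos_def A" and "pos_def (A + \<alpha> *\<^sub>R (Z ** transpose Z))"
    and "V = (if \<beta> = 1 then Z
              else matrix_inv A ** Z **
                   matrix_inv (msqrt (mat 1 + \<alpha> *\<^sub>R (transpose Z ** matrix_inv A ** Z))))"
  shows "mpow_half \<beta> A ** ((\<alpha> * \<beta>) *\<^sub>R (mpow_half \<beta> (A + \<alpha> *\<^sub>R (Z ** transpose Z)) - mpow_half \<beta> A))
         + ((\<alpha> * \<beta>) *\<^sub>R (mpow_half \<beta> (A + \<alpha> *\<^sub>R (Z ** transpose Z)) - mpow_half \<beta> A)) ** mpow_half \<beta> A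
         + (\<alpha> * \<beta>) *\<^sub>R (((\<alpha> * \<beta>) *\<^sub>R (mpow_half \<beta> (A + \<alpha> *\<^sub>R (Z ** transpose Z)) - mpow_half \<beta> A))
                          ** ((\<alpha> * \<beta>) *\<^sub>R (mpow_half \<beta> (A + \<alpha> *\<^sub>R (Z ** transpose Z)) - mpow_half \<beta> A)))
         = V ** transpose V
         \<and> (\<forall>C :: real^'n^'n.
           mpow_half \<beta> A ** C + C ** mpow_half \<beta> A + (\<alpha> * \<beta>) *\<^sub>R (C ** C) = V ** transpose V \<and>
           pos_def C \<and> pos_def (mpow_half \<beta> A + (\<alpha> * \<beta>) *\<^sub>R C) \<longrightarrow>
           mpow_half \<beta> A + (\<alpha> * \<beta>) *\<^sub>R C = mpow_half \<beta> (A + \<alpha> *\<^sub>R (Z ** transpose Z)))"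
proof -
  define S where "S = mpow_half \<beta> A"
  define T where "T = mpow_half \<beta> (A + \<alpha> *\<^sub>R (Z ** transpose Z))"
  define \<gamma> where "\<gamma> = \<alpha> * \<beta>"
  have \<gamma>: "\<gamma> * \<gamma> = 1"
    using assms(2,3) by (auto simp: \<gamma>_def)
  have T_square: "T ** T = S ** S + \<gamma> *\<^sub>R (V ** transpose V)"
    unfolding S_def T_def \<gamma>_def using mpow_half_low_rank_update_square assms(2-6) by blast
  have completed: "S + \<gamma> *\<^sub>R (\<gamma> *\<^sub>R (T - S)) = T"
    using \<gamma> by (simp add: algebra_simps)
  have "S ** (\<gamma> *\<^sub>R (T - S)) + (\<gamma> *\<^sub>R (T - S)) ** S + \<gamma> *\<^sub>R ((\<gamma> *\<^sub>R (T - S)) ** (\<gamma> *\<^sub>R (T - S)))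
      = V ** transpose V"
    by (simp only: riccati_iff_completed_square[OF \<gamma>] completed T_square)
  moreover have "S + \<gamma> *\<^sub>R C = T"
    if "S ** C + C ** S + \<gamma> *\<^sub>R (C ** C) = V ** transpose V" "pos_def (S + \<gamma> *\<^sub>R C)" for C
  proof -
    have "(S + \<gamma> *\<^sub>R C) ** (S + \<gamma> *\<^sub>R C) = T ** T"
      using that(1) by (simp only: riccati_iff_completed_square[OF \<gamma>] T_square)
    moreover have "pos_def T"
      unfolding T_def using assms(5,3) by (rule pos_def_mpow_half)
    ultimately show ?thesis
      using pos_def_square_root_unique that(2) by blast
  qed
  ultimately show ?thesis
    unfolding S_def T_def \<gamma>_def by blast
qed

end
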